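(* Let $x,h$ be real numbers with $0\le x<x+h<1$, and write $x=\sum_{k\ge1}2^{-k}\varepsilon_k$, $x+h=\sum_{k\ge1}2^{-k}\varepsilon'_k$ with $\varepsilon_k,\varepsilon'_k\in\{0,1\}$, where for dyadic rationals the expansion that is eventually all zeros is chosen. Let $p$ be the nonnegative integer with $2^{-p-1}<h\le 2^{-p}$, and let $k_0:=\max\{k:\varepsilon_1=\varepsilon'_1,\dots,\varepsilon_k=\varepsilon'_k\}$ (with $k_0=0$ if $\varepsilon_1\ne\varepsilon'_1$). Assume $k_0<p$. Then $$\sum_{k=p+1}^\infty 2^{-k}(1-\varepsilon_k-\varepsilon'_k)\le h.$$ Moreover, if $m\ge0$ is an integer with $\varepsilon_{p+m+1}=0$, then $$\sum_{k=p+1}^\infty 2^{-k}(1-\varepsilon_k-\varepsilon'_k)\ge -h(1-2^{-m}).$$ *)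

theory Defs
  imports Complex_Main
begin

text \<open>k-th binary digit (k \<ge> 1) of a real x in [0,1), using the expansion that is
  eventually zero for dyadic rationals: eps_k = floor(2^k x) mod 2.\<close>
definition bdigit :: "nat \<Rightarrow> real \<Rightarrow> int" where
  "bdigit k x = \<lfloor>2 ^ k * x\<rfloor> mod 2"

definition common_prefix :: "real \<Rightarrow> real \<Rightarrow> nat" where
  "common_prefix x y = (GREATEST k. \<forall>j\<in>{1..k}. bdigit j x = bdigit j y)"

end

theory Submission
  imports Defs
begin

text \<open>The tail \<open>\<Sum>\<^sub>k\<^sub>>\<^sub>p 2^-k \<epsilon>\<^sub>k\<close> of the binary expansion of \<open>y\<close> is \<open>frac (2^p y) / 2^p\<close>.
  Since the expansions of \<open>x\<close> and \<open>x + h\<close> differ before position \<open>p\<close> and \<open>h \<le> 2^-p\<close>, we have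
  \<open>\<lfloor>2^p (x + h)\<rfloor> = \<lfloor>2^p x\<rfloor> + 1\<close>; so with \<open>u = frac (2^p x)\<close> the sum in question is
  \<open>(2 - 2u) / 2^p - h\<close>. It is at most \<open>h\<close> because \<open>frac (2^p (x + h)) = u + 2^p h - 1 \<ge> 0\<close>, and a
  zero digit \<open>\<epsilon>\<^sub>p\<^sub>+\<^sub>m\<^sub>+\<^sub>1\<close> forces \<open>u \<le> 1 - 2^-(m+1)\<close>, i.e. \<open>(2 - 2u) / 2^p \<ge> 2^-(p+m) \<ge> h 2^-m\<close>.\<close>

lemma floor_pow2_div:
  fixes y :: real
  shows "\<lfloor>2 ^ j * y\<rfloor> = \<lfloor>2 ^ (j + d) * y\<rfloor> div 2 ^ d"
proof -
  have "2 ^ j * y = 2 ^ (j + d) * y / real_of_int (2 ^ d)"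
    by (simp add: power_add)
  then show ?thesis
    using floor_divide_real_eq_div[of "2 ^ d" "2 ^ (j + d) * y"] by simp
qed

lemma floor_pow2_Suc:
  fixes y :: real
  shows "\<lfloor>2 ^ Suc j * y\<rfloor> = 2 * \<lfloor>2 ^ j * y\<rfloor> + bdigit (Suc j) y"
  using floor_pow2_div[of j y 1] unfolding bdigit_def by simp

lemma frac_pow2_Suc:
  fixes y :: real
  shows "frac (2 ^ Suc j * y) = 2 * frac (2 ^ j * y) - bdigit (Suc j) y"
  using floor_pow2_Suc[of j y] unfolding frac_def by simp

lemma bdigit_eq_if_floor_pow2_eq:
  assumes "j \<le> k" and "\<lfloor>2 ^ k * x\<rfloor> = \<lfloor>2 ^ k * y\<rfloor>"
  shows "bdigit j x = bdigit j y"
  using assms floor_pow2_div[of j _ "k - j"] unfolding bdigit_def by simp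

lemma floor_pow2_eq_if_bdigits_eq:
  assumes "0 \<le> x" "x < 1" "0 \<le> y" "y < 1"
    and "\<forall>j\<in>{1..k}. bdigit j x = bdigit j y"
  shows "\<lfloor>2 ^ k * x\<rfloor> = \<lfloor>2 ^ k * y\<rfloor>"
  using assms(5)
proof (induction k)
  case 0
  have "\<lfloor>x\<rfloor> = 0" "\<lfloor>y\<rfloor> = 0"
    using assms(1-4) by (auto intro: floor_unique)
  then show ?case by simp
next
  case (Suc k)
  then have "\<lfloor>2 ^ k * x\<rfloor> = \<lfloor>2 ^ k * y\<rfloor>"
    by simp
  moreover have "bdigit (Suc k) x = bdigit (Suc k) y"
    using Suc.prems by simp
  ultimately show ?case
    by (simp only: floor_pow2_Suc)
qed

lemma le_common_prefix_if_floor_pow2_eq: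
  assumes "0 \<le> x" "x < y" "y < 1" and "\<lfloor>2 ^ p * x\<rfloor> = \<lfloor>2 ^ p * y\<rfloor>"
  shows "p \<le> common_prefix x y"
proof -
  obtain K :: nat where K: "1 / (y - x) < 2 ^ K"
    using real_arch_pow[of 2 "1 / (y - x)"] by auto
  have bounded: "k \<le> K" if "\<forall>j\<in>{1..k}. bdigit j x = bdigit j y" for k
  proof (rule ccontr)
    assume "\<not> k \<le> K"
    with that have "\<forall>j\<in>{1..K}. bdigit j x = bdigit j y"
      by simp
    then have "\<lfloor>2 ^ K * x\<rfloor> = \<lfloor>2 ^ K * y\<rfloor>"
      using assms(1-3) by (intro floor_pow2_eq_if_bdigits_eq) auto
    moreover have "1 \<le> 2 ^ K * (y - x)"
      using K assms(2) by (simp add: field_simps)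
    ultimately show False
      by (simp add: right_diff_distrib) linarith
  qed
  have "\<forall>j\<in>{1..p}. bdigit j x = bdigit j y"
    using bdigit_eq_if_floor_pow2_eq[OF _ assms(4)] by simp
  then show ?thesis
    unfolding common_prefix_def by (rule Greatest_le_nat[where b = K]) (use bounded in blast)
qed

lemma bdigit_tail_partial_sum:
  "(\<Sum>k<n. (1/2) ^ (k + p + 1) * real_of_int (bdigit (k + p + 1) y))
     = frac (2 ^ p * y) / 2 ^ p - frac (2 ^ (p + n) * y) / 2 ^ (p + n)"
proof (induction n)
  case 0
  then show ?case by simp
next
  case (Suc n)
  then show ?case
    using frac_pow2_Suc[of "p + n" y] by (simp add: field_simps power_add)
qed

lemma frac_pow2_div_pow2_tendsto_0:
  fixes y :: real
  shows "(\<lambda>n. frac (2 ^ n * y) / 2 ^ n) \<longlonglongrightarrow> 0"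
proof (rule real_tendsto_sandwich[where f = "\<lambda>_. 0" and h = "\<lambda>n. (1/2) ^ n"])
  show "\<forall>\<^sub>F n in sequentially. 0 \<le> frac (2 ^ n * y) / 2 ^ n"
    by simp
  show "\<forall>\<^sub>F n in sequentially. frac (2 ^ n * y) / 2 ^ n \<le> (1/2) ^ n"
  proof (intro always_eventually allI)
    fix n :: nat
    have "frac (2 ^ n * y) \<le> 1"
      by (simp add: less_imp_le frac_lt_1)
    then show "frac (2 ^ n * y) / 2 ^ n \<le> (1/2) ^ n"
      by (simp add: divide_right_mono power_one_over)
  qed
  show "(\<lambda>n. (1/2::real) ^ n) \<longlonglongrightarrow> 0"
    by (rule LIMSEQ_power_zero) simp
qed simp

lemma bdigit_tail_sums:
  "(\<lambda>k. (1/2) ^ (k + p + 1) * real_of_int (bdigit (k + p + 1) y)) sums (frac (2 ^ p * y) / 2 ^ p)"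
proof -
  have "(\<lambda>n. frac (2 ^ (n + p) * y) / 2 ^ (n + p)) \<longlonglongrightarrow> 0"
    using LIMSEQ_ignore_initial_segment[OF frac_pow2_div_pow2_tendsto_0[of y], of p] .
  then have "(\<lambda>n. frac (2 ^ p * y) / 2 ^ p - frac (2 ^ (p + n) * y) / 2 ^ (p + n))
               \<longlonglongrightarrow> frac (2 ^ p * y) / 2 ^ p"
    using tendsto_diff[OF tendsto_const] by (force simp: add.commute)
  then show ?thesis
    unfolding sums_def bdigit_tail_partial_sum .
qed

lemma geometric_tail_sums: "(\<lambda>k. (1/2::real) ^ (k + p + 1)) sums ((1/2) ^ p)"
proof -
  have "(\<lambda>k. (1/2) ^ (p + 1) * (1/2::real) ^ k) sums ((1/2) ^ (p + 1) * (1 / (1 - 1/2)))"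
    by (intro sums_mult geometric_sums) simp
  then show ?thesis by (simp add: power_add mult.commute)
qed

lemma bdigit_defect_tail_sums:
  "(\<lambda>k. (1/2) ^ (k + p + 1) * (1 - real_of_int (bdigit (k + p + 1) x)
                                   - real_of_int (bdigit (k + p + 1) y)))
     sums ((1 - frac (2 ^ p * x) - frac (2 ^ p * y)) / 2 ^ p)"
  using sums_diff[OF sums_diff[OF geometric_tail_sums bdigit_tail_sums] bdigit_tail_sums]
  by (simp add: right_diff_distrib diff_divide_distrib power_one_over)

lemma frac_pow2_le_if_bdigit_eq_0:
  assumes "bdigit (p + m + 1) x = 0"
  shows "frac (2 ^ p * x) \<le> 1 - (1/2) ^ (m + 1)"
proof (rule ccontr)
  define u where "u = frac (2 ^ p * x)"
  assume "\<not> u \<le> 1 - (1/2) ^ (m + 1)"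
  then have "2 ^ (m + 1) - 1 < 2 ^ (m + 1) * u" "2 ^ (m + 1) * u < 2 ^ (m + 1)"
    using frac_lt_1[of "2 ^ p * x"] by (simp_all add: u_def field_simps power_one_over)
  then have top: "\<lfloor>2 ^ (m + 1) * u\<rfloor> = 2 ^ (m + 1) - 1"
    by (simp add: floor_eq_iff)
  have "2 ^ (p + m + 1) * x = of_int (2 ^ (m + 1) * \<lfloor>2 ^ p * x\<rfloor>) + 2 ^ (m + 1) * u"
    unfolding u_def frac_def by (simp add: algebra_simps power_add)
  then have "\<lfloor>2 ^ (p + m + 1) * x\<rfloor> = 2 ^ (m + 1) * \<lfloor>2 ^ p * x\<rfloor> + \<lfloor>2 ^ (m + 1) * u\<rfloor>"
    by (simp only: int_add_floor[symmetric])
  also have "\<dots> = 2 * (2 ^ m * \<lfloor>2 ^ p * x\<rfloor> + 2 ^ m - 1) + 1"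
    unfolding top by (simp add: algebra_simps)
  finally have "\<lfloor>2 ^ (p + m + 1) * x\<rfloor> = 2 * (2 ^ m * \<lfloor>2 ^ p * x\<rfloor> + 2 ^ m - 1) + 1" .
  then have "bdigit (p + m + 1) x = 1"
    unfolding bdigit_def by presburger
  with assms show False by simp
qed

lemma bdigit_defect_tail_closed_form:
  fixes x y :: real
  assumes "\<lfloor>2 ^ p * y\<rfloor> = \<lfloor>2 ^ p * x\<rfloor> + 1"
  shows "(\<Sum>k. (1/2) ^ (k + p + 1) * (1 - real_of_int (bdigit (k + p + 1) x)
                                       - real_of_int (bdigit (k + p + 1) y)))
           = (2 - 2 * frac (2 ^ p * x)) / 2 ^ p - (y - x)"
proof -
  have "frac (2 ^ p * y) = frac (2 ^ p * x) + 2 ^ p * (y - x) - 1"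
    using assms unfolding frac_def by (simp add: right_diff_distrib)
  then show ?thesis
    using sums_unique[OF bdigit_defect_tail_sums[of p x y]]
    by (simp add: diff_divide_distrib add_divide_distrib)
qed

lemma bdigit_defect_tail_le:
  fixes x y :: real
  assumes "\<lfloor>2 ^ p * y\<rfloor> = \<lfloor>2 ^ p * x\<rfloor> + 1"
  shows "(\<Sum>k. (1/2) ^ (k + p + 1) * (1 - real_of_int (bdigit (k + p + 1) x)
                                       - real_of_int (bdigit (k + p + 1) y))) \<le> y - x"
proof -
  have "1 - frac (2 ^ p * x) \<le> 2 ^ p * (y - x)"
    using assms frac_ge_0[of "2 ^ p * y"] unfolding frac_def
    by (simp add: right_diff_distrib)
  then show ?thesis
    unfolding bdigit_defect_tail_closed_form[OF assms] by (simp add: field_simps)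
qed

lemma bdigit_defect_tail_ge:
  fixes x y :: real
  assumes "\<lfloor>2 ^ p * y\<rfloor> = \<lfloor>2 ^ p * x\<rfloor> + 1" and "y - x \<le> (1/2) ^ p"
    and "bdigit (p + m + 1) x = 0"
  shows "(\<Sum>k. (1/2) ^ (k + p + 1) * (1 - real_of_int (bdigit (k + p + 1) x)
                                       - real_of_int (bdigit (k + p + 1) y)))
           \<ge> - (y - x) * (1 - (1/2) ^ m)"
proof -
  have "(y - x) * (1/2) ^ m \<le> (1/2) ^ p * (1/2) ^ m"
    using assms(2) by (simp add: mult_right_mono)
  also have "\<dots> \<le> (1/2) ^ p * (2 - 2 * frac (2 ^ p * x))"
    using frac_pow2_le_if_bdigit_eq_0[OF assms(3)] by (intro mult_left_mono) simp_all
  finally show ?thesis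
    unfolding bdigit_defect_tail_closed_form[OF assms(1)]
    by (simp add: algebra_simps power_one_over diff_divide_distrib)
qed

lemma floor_pow2_add_eq_plus_one_if_common_prefix_less:
  fixes x h :: real
  assumes "0 \<le> x" "0 < h" "x + h < 1" "h \<le> (1/2) ^ p"
    and "common_prefix x (x + h) < p"
  shows "\<lfloor>2 ^ p * (x + h)\<rfloor> = \<lfloor>2 ^ p * x\<rfloor> + 1"
proof -
  have "\<lfloor>2 ^ p * x\<rfloor> \<noteq> \<lfloor>2 ^ p * (x + h)\<rfloor>"
    using le_common_prefix_if_floor_pow2_eq[of x "x + h" p] assms by auto
  moreover have "2 ^ p * x < 2 ^ p * (x + h)" "2 ^ p * (x + h) \<le> 2 ^ p * x + 1"
    using assms(2,4) by (simp_all add: distrib_left field_simps power_one_over)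
  ultimately show ?thesis
    by linarith
qed

theorem lemma1:
  fixes x h :: real and p :: nat
  assumes "0 \<le> x" and "0 < h" and "x + h < 1"
    and "(1/2) ^ (p + 1) < h" and "h \<le> (1/2) ^ p"
    and "common_prefix x (x + h) < p"
  shows "(\<Sum>k. (1/2) ^ (k + p + 1) * (1 - real_of_int (bdigit (k + p + 1) x)
                                         - real_of_int (bdigit (k + p + 1) (x + h)))) \<le> h
   \<and> (\<forall>m::nat. bdigit (p + m + 1) x = 0 \<longrightarrow>
       (\<Sum>k. (1/2) ^ (k + p + 1) * (1 - real_of_int (bdigit (k + p + 1) x)
                                    - real_of_int (bdigit (k + p + 1) (x + h))))
         \<ge> - h * (1 - (1/2) ^ m))"
proof (intro conjI allI impI)
  have shift: "\<lfloor>2 ^ p * (x + h)\<rfloor> = \<lfloor>2 ^ p * x\<rfloor> + 1"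
    using assms(1-3,5,6) by (rule floor_pow2_add_eq_plus_one_if_common_prefix_less)
  show "(\<Sum>k. (1/2) ^ (k + p + 1) * (1 - real_of_int (bdigit (k + p + 1) x)
                                     - real_of_int (bdigit (k + p + 1) (x + h)))) \<le> h"
    using bdigit_defect_tail_le[OF shift] by simp
  show "(\<Sum>k. (1/2) ^ (k + p + 1) * (1 - real_of_int (bdigit (k + p + 1) x)
                                     - real_of_int (bdigit (k + p + 1) (x + h))))
          \<ge> - h * (1 - (1/2) ^ m)"
    if "bdigit (p + m + 1) x = 0" for m
    using bdigit_defect_tail_ge[OF shift _ that] assms(5) by simp
qed

end
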